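(* Let $\sigma_w^2=0$. Then $(\alpha,\sigma^2)=(1,0)$ is a fixed point of the complex SE map, i.e. $\psi_1(1,0)=1$ and $\psi_2(1,0;\delta,0)=0$ for every $\delta>0$. Moreover: (a) if $\delta>2$, there exist constants $\epsilon_1>0$, $\epsilon_2>0$ such that for every real $\alpha_0\in(1-\epsilon_1,1)$ and every $\sigma_0^2\in(0,\epsilon_2)$ the SE sequences satisfy $\alpha_t\to1$ and $\sigma_t^2\to0$; (b) if $\delta<2$, the SE sequences cannot converge to $(1,0)$ unless $(\alpha_0,\sigma_0^2)=(1,0)$.
   Context: Complex state evolution (SE). Fix $\delta>0$ and $\sigma_w^2\ge0$. For $\alpha\in\mathbb{C}$ and $\sigma^2\ge0$ with $(\alpha,\sigma^2)\neq(0,0)$, let $\theta_\alpha$ be the argument of $\alpha$ ($\theta_0:=0$) and define $$\psi_1(\alpha,\sigma^2)=e^{\mathrm{i}\theta_\alpha}\int_0^{\pi/2}\frac{|\alpha|\sin^2\theta}{(|\alpha|^2\sin^2\theta+\sigma^2)^{1/2}}\,d\theta,$$ $$\psi_2(\alpha,\sigma^2;\delta,\sigma_w^2)=\frac4\delta\Big(|\alpha|^2+\sigma^2+1-\int_0^{\pi/2}\frac{2|\alpha|^2\sin^2\theta+\sigma^2}{(|\alpha|^2\sin^2\theta+\sigma^2)^{1/2}}\,d\theta\Big)+4\sigma_w^2 .$$ Given $(\alpha_0,\sigma_0^2)$, the SE sequences are defined by $\alpha_{t+1}=\psi_1(\alpha_t,\sigma_t^2)$, $\sigma_{t+1}^2=\psi_2(\alpha_t,\sigma_t^2;\delta,\sigma_w^2)$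 for $t\ge0$. *)

theory Defs
  imports "HOL-Analysis.Analysis"
begin

text \<open>Complex state evolution maps. The phase factor e^{i theta_alpha} is cis (Arg alpha);
  note Arg 0 = 0, matching the convention theta_0 = 0.\<close>

definition psi1 :: "complex \<Rightarrow> real \<Rightarrow> complex" where
  "psi1 \<alpha> s2 = cis (Arg \<alpha>) *
     complex_of_real (integral {0..pi/2}
        (\<lambda>\<theta>. cmod \<alpha> * (sin \<theta>)\<^sup>2 / sqrt ((cmod \<alpha>)\<^sup>2 * (sin \<theta>)\<^sup>2 + s2)))"

definition psi2 :: "complex \<Rightarrow> real \<Rightarrow> real \<Rightarrow> real \<Rightarrow> real" where
  "psi2 \<alpha> s2 \<delta> sw2 = 4 / \<delta> * ((cmod \<alpha>)\<^sup>2 + s2 + 1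
      - integral {0..pi/2}
          (\<lambda>\<theta>. (2 * (cmod \<alpha>)\<^sup>2 * (sin \<theta>)\<^sup>2 + s2) / sqrt ((cmod \<alpha>)\<^sup>2 * (sin \<theta>)\<^sup>2 + s2)))
      + 4 * sw2"

primrec se :: "real \<Rightarrow> real \<Rightarrow> complex \<Rightarrow> real \<Rightarrow> nat \<Rightarrow> complex \<times> real" where
  "se \<delta> sw2 \<alpha>0 s0 0 = (\<alpha>0, s0)"
| "se \<delta> sw2 \<alpha>0 s0 (Suc t) =
     (psi1 (fst (se \<delta> sw2 \<alpha>0 s0 t)) (snd (se \<delta> sw2 \<alpha>0 s0 t)),
      psi2 (fst (se \<delta> sw2 \<alpha>0 s0 t)) (snd (se \<delta> sw2 \<alpha>0 s0 t)) \<delta> sw2)"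

end

theory Submission
  imports Defs
begin

text \<open>
  Write \<open>I\<^sub>1\<close>, \<open>I\<^sub>2\<close> for the two integrals in \<open>\<psi>\<^sub>1\<close>, \<open>\<psi>\<^sub>2\<close> and \<open>R = \<surd>(|\<alpha>|\<^sup>2 + \<sigma>\<^sup>2)\<close>.
  An integration by parts gives \<open>I\<^sub>2 = 2R - \<sigma>\<^sup>2 W\<close> with \<open>1/(2R) - O(\<sigma>) \<le> W \<le> 1/(2R)\<close>, so
  \<open>\<psi>\<^sub>2 = (4/\<delta>)((R - 1)\<^sup>2 + \<sigma>\<^sup>2 W)\<close>: near \<open>(1,0)\<close> the variance is multiplied by about
  \<open>2/\<delta>\<close>, while \<open>1 - \<psi>\<^sub>1 = O(\<sigma>\<^sup>2 log(1/\<sigma>\<^sup>2))\<close> for real \<open>\<alpha>\<close>.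

  For \<open>\<delta> > 2\<close> the potential \<open>\<sigma>\<^sup>2 + \<beta>(1 - \<alpha>)\<^sup>2\<close> therefore contracts by a fixed factor
  \<open>\<rho> < 1\<close> on a small neighbourhood of \<open>(1,0)\<close>, which the iteration never leaves.

  For \<open>\<delta> < 2\<close> a positive variance strictly increases near \<open>(1,0)\<close>, so a sequence converging
  to \<open>(1,0)\<close> eventually has \<open>\<sigma>\<^sup>2 = 0\<close>; then \<open>\<psi>\<^sub>2 = (4/\<delta>)(|\<alpha>| - 1)\<^sup>2\<close> forces \<open>|\<alpha>| = 1\<close>
  and \<open>\<psi>\<^sub>1(\<alpha>, 0) = sgn \<alpha>\<close> freezes \<open>\<alpha>\<close>, so \<open>\<alpha> = 1\<close> from then on. Finally \<open>(1,0)\<close> has no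
  preimage other than itself, because \<open>|\<psi>\<^sub>1(\<alpha>, \<sigma>\<^sup>2)| < 1\<close> whenever \<open>\<sigma>\<^sup>2 > 0\<close>.
\<close>

lemma has_integral_of_real_derivative:
  fixes F f :: "real \<Rightarrow> real"
  assumes "a \<le> b" "\<And>x. x \<in> {a..b} \<Longrightarrow> (F has_real_derivative f x) (at x)"
  shows "(f has_integral F b - F a) {a..b}"
  by (rule fundamental_theorem_of_calculus)
     (use assms in \<open>auto simp: has_real_derivative_iff_has_vector_derivative[symmetric]
                          intro: has_field_derivative_at_within\<close>)

lemma sin_has_integral_0_pi_half: "(sin has_integral 1) {0..pi/2}"
  using integrable_integral[OF integrable_continuous_interval[OF continuous_on_sin[OF continuous_on_id]], of 0 "pi/2"]
  by simp

lemma sin_cos_0_pi_half_bounds: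
  assumes "t \<in> {0..pi/2}"
  shows "0 \<le> sin t" "sin t \<le> 1" "0 \<le> cos t"
  using assms by (auto intro: sin_ge_zero cos_ge_zero)

lemma sqrt_sq_sin_pos:
  fixes a s S :: real
  assumes "0 < s"
  shows "0 < sqrt (a\<^sup>2 * S\<^sup>2 + s)"
  using assms by (simp add: add_nonneg_pos)

definition I1 :: "real \<Rightarrow> real \<Rightarrow> real" where
  "I1 a s = integral {0..pi/2} (\<lambda>t. a * (sin t)\<^sup>2 / sqrt (a\<^sup>2 * (sin t)\<^sup>2 + s))"

definition I2 :: "real \<Rightarrow> real \<Rightarrow> real" where
  "I2 a s = integral {0..pi/2} (\<lambda>t. (2 * a\<^sup>2 * (sin t)\<^sup>2 + s) / sqrt (a\<^sup>2 * (sin t)\<^sup>2 + s))"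

definition W :: "real \<Rightarrow> real \<Rightarrow> real" where
  "W a s = integral {0..pi/2}
     (\<lambda>t. (sin t)\<^sup>2 / (sqrt (a\<^sup>2 * (sin t)\<^sup>2 + s) + sqrt (a\<^sup>2 + s) * sin t))"

lemma psi1_eq_I1: "psi1 \<alpha> s = cis (Arg \<alpha>) * complex_of_real (I1 (cmod \<alpha>) s)"
  by (simp add: psi1_def I1_def)

lemma psi2_eq_I2: "psi2 \<alpha> s \<delta> w = 4 / \<delta> * ((cmod \<alpha>)\<^sup>2 + s + 1 - I2 (cmod \<alpha>) s) + 4 * w"
  by (simp add: psi2_def I2_def)

lemma psi1_of_real:
  assumes "0 < a"
  shows "psi1 (complex_of_real a) s = complex_of_real (I1 a s)"
  using assms by (simp add: psi1_eq_I1)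

lemma I1_zero_variance:
  assumes "0 < a"
  shows "I1 a 0 = 1"
proof -
  have "((\<lambda>t. a * (sin t)\<^sup>2 / sqrt (a\<^sup>2 * (sin t)\<^sup>2 + 0)) has_integral 1) {0..pi/2}"
  proof (rule has_integral_spike_finite[OF finite.emptyI _ sin_has_integral_0_pi_half])
    fix t assume "t \<in> {0..pi/2} - {}"
    then have "0 \<le> sin t" by (rule sin_cos_0_pi_half_bounds(1)[OF DiffD1])
    then show "a * (sin t)\<^sup>2 / sqrt (a\<^sup>2 * (sin t)\<^sup>2 + 0) = sin t"
      using assms by (cases "sin t = 0") (auto simp: real_sqrt_mult power2_eq_square)
  qed
  then show ?thesis unfolding I1_def by (rule integral_unique)
qed

lemma I2_zero_variance:
  assumes "0 \<le> a"
  shows "I2 a 0 = 2 * a"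
proof -
  have "((\<lambda>t. (2 * a\<^sup>2 * (sin t)\<^sup>2 + 0) / sqrt (a\<^sup>2 * (sin t)\<^sup>2 + 0)) has_integral 2 * a * 1) {0..pi/2}"
  proof (rule has_integral_spike_finite[OF finite.emptyI _
        has_integral_mult_right[OF sin_has_integral_0_pi_half]])
    fix t assume "t \<in> {0..pi/2} - {}"
    then have "0 \<le> sin t" by (rule sin_cos_0_pi_half_bounds(1)[OF DiffD1])
    then show "(2 * a\<^sup>2 * (sin t)\<^sup>2 + 0) / sqrt (a\<^sup>2 * (sin t)\<^sup>2 + 0) = 2 * a * sin t"
      using assms by (cases "a * sin t = 0") (auto simp: real_sqrt_mult power2_eq_square)
  qed
  then show ?thesis unfolding I2_def by (simp add: integral_unique)
qed

lemma psi1_zero_variance: "psi1 \<alpha> 0 = sgn \<alpha>"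
proof (cases "\<alpha> = 0")
  case False
  then show ?thesis by (simp add: psi1_eq_I1 I1_zero_variance cis_Arg)
qed (simp add: psi1_eq_I1 I1_def)

lemma psi2_zero_variance: "psi2 \<alpha> 0 \<delta> 0 = 4 / \<delta> * (cmod \<alpha> - 1)\<^sup>2"
  by (simp add: psi2_eq_I2 I2_zero_variance power2_diff algebra_simps)

lemma I2_antiderivative:
  fixes a s R t :: real
  assumes s: "0 < s" and R: "R = sqrt (a\<^sup>2 + s)" and t: "t \<in> {0..pi/2}"
  defines "r \<equiv> \<lambda>t. sqrt (a\<^sup>2 * (sin t)\<^sup>2 + s)"
  shows "((\<lambda>t. s * sin t * cos t / (r t + R * sin t) - 2 * R * cos t) has_real_derivative
     (2 * a\<^sup>2 * (sin t)\<^sup>2 + s) / r t + s * ((sin t)\<^sup>2 / (r t + R * sin t))) (at t)"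
proof -
  define p where "p = r t"
  define D where "D = p + R * sin t"
  have p: "0 < p" and psq: "p\<^sup>2 = a\<^sup>2 * (sin t)\<^sup>2 + s"
    using sqrt_sq_sin_pos[OF s] s by (simp_all add: p_def r_def add_nonneg_pos)
  have Rsq: "R\<^sup>2 = a\<^sup>2 + s" using s by (simp add: R)
  have D: "0 < D"
    using p sin_cos_0_pi_half_bounds[OF t] s by (simp add: D_def R add_pos_nonneg)
  have pos: "0 < a\<^sup>2 * (sin t)\<^sup>2 + s" using s by (simp add: add_nonneg_pos)
  have "((\<lambda>t. s * sin t * cos t / (r t + R * sin t)) has_real_derivative
     ((s * cos t * cos t + s * sin t * (- sin t)) * D
       - s * sin t * cos t * (a\<^sup>2 * (2 * sin t * cos t) / (2 * p) + R * cos t)) / D\<^sup>2) (at t)"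
    unfolding r_def p_def D_def using pos D[unfolded D_def p_def r_def]
    by (auto intro!: derivative_eq_intros simp: power2_eq_square field_simps)
  from DERIV_diff[OF this DERIV_cmult[OF DERIV_cos, of "2 * R"]]
  have deriv: "((\<lambda>t. s * sin t * cos t / (r t + R * sin t) - 2 * R * cos t) has_real_derivative
     ((s * cos t * cos t + s * sin t * (- sin t)) * D
       - s * sin t * cos t * (a\<^sup>2 * (2 * sin t * cos t) / (2 * p) + R * cos t)) / D\<^sup>2
       + 2 * R * sin t) (at t)" by simp
  have "s * ((cos t)\<^sup>2 - (sin t)\<^sup>2) * D * p - s * sin t * cos t * (a\<^sup>2 * sin t * cos t + R * cos t * p)
      = (2 * a\<^sup>2 * (sin t)\<^sup>2 + s) * D\<^sup>2 - 2 * R * sin t * p * D\<^sup>2 + s * (sin t)\<^sup>2 * p * D"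
    using psq Rsq sin_cos_squared_add[of t] unfolding D_def by algebra
  then have "((s * cos t * cos t + s * sin t * (- sin t)) * D
       - s * sin t * cos t * (a\<^sup>2 * (2 * sin t * cos t) / (2 * p) + R * cos t)) / D\<^sup>2
      = ((2 * a\<^sup>2 * (sin t)\<^sup>2 + s) * D\<^sup>2 - 2 * R * sin t * p * D\<^sup>2 + s * (sin t)\<^sup>2 * p * D) / (p * D\<^sup>2)"
    using p D by (simp add: field_simps power2_eq_square)
  also have "\<dots> = (2 * a\<^sup>2 * (sin t)\<^sup>2 + s) / p - 2 * R * sin t + s * ((sin t)\<^sup>2 / D)"
    using p D by (simp add: field_simps power2_eq_square)
  finally have "((s * cos t * cos t + s * sin t * (- sin t)) * D
       - s * sin t * cos t * (a\<^sup>2 * (2 * sin t * cos t) / (2 * p) + R * cos t)) / D\<^sup>2 + 2 * R * sin t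
      = (2 * a\<^sup>2 * (sin t)\<^sup>2 + s) / p + s * ((sin t)\<^sup>2 / D)" by simp
  with deriv show ?thesis by (simp add: p_def D_def)
qed

lemma W_integrable:
  assumes "0 < s"
  shows "(\<lambda>t. (sin t)\<^sup>2 / (sqrt (a\<^sup>2 * (sin t)\<^sup>2 + s) + sqrt (a\<^sup>2 + s) * sin t))
           integrable_on {0..pi/2}"
proof (rule integrable_continuous_interval)
  have "0 < sqrt (a\<^sup>2 * (sin t)\<^sup>2 + s) + sqrt (a\<^sup>2 + s) * sin t" if "t \<in> {0..pi/2}" for t
    using sqrt_sq_sin_pos[OF assms] sin_cos_0_pi_half_bounds[OF that] assms
    by (simp add: add_pos_nonneg)
  then show "continuous_on {0..pi/2}
           (\<lambda>t. (sin t)\<^sup>2 / (sqrt (a\<^sup>2 * (sin t)\<^sup>2 + s) + sqrt (a\<^sup>2 + s) * sin t))"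
    by (intro continuous_intros) (auto simp del: divide_const_simps, fastforce)
qed

lemma I2_eq_W:
  assumes s: "0 < s"
  shows "I2 a s = 2 * sqrt (a\<^sup>2 + s) - s * W a s"
proof -
  define R where "R = sqrt (a\<^sup>2 + s)"
  define f where "f = (\<lambda>t. (2 * a\<^sup>2 * (sin t)\<^sup>2 + s) / sqrt (a\<^sup>2 * (sin t)\<^sup>2 + s))"
  define g where "g = (\<lambda>t. (sin t)\<^sup>2 / (sqrt (a\<^sup>2 * (sin t)\<^sup>2 + s) + R * sin t))"
  have "((\<lambda>t. f t + s * g t) has_integral
      (s * sin (pi/2) * cos (pi/2) / (sqrt (a\<^sup>2 * (sin (pi/2))\<^sup>2 + s) + R * sin (pi/2)) - 2 * R * cos (pi/2))
      - (s * sin 0 * cos 0 / (sqrt (a\<^sup>2 * (sin 0)\<^sup>2 + s) + R * sin 0) - 2 * R * cos 0)) {0..pi/2}"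
    unfolding f_def g_def
  proof (rule has_integral_of_real_derivative)
    fix t :: real assume "t \<in> {0..pi/2}"
    from I2_antiderivative[OF s R_def this]
    show "((\<lambda>t. s * sin t * cos t / (sqrt (a\<^sup>2 * (sin t)\<^sup>2 + s) + R * sin t) - 2 * R * cos t)
      has_real_derivative (2 * a\<^sup>2 * (sin t)\<^sup>2 + s) / sqrt (a\<^sup>2 * (sin t)\<^sup>2 + s)
        + s * ((sin t)\<^sup>2 / (sqrt (a\<^sup>2 * (sin t)\<^sup>2 + s) + R * sin t))) (at t)" .
  qed simp
  then have sum: "((\<lambda>t. f t + s * g t) has_integral 2 * R) {0..pi/2}" by simp
  have part: "((\<lambda>t. s * g t) has_integral s * W a s) {0..pi/2}"
    using W_integrable[OF s]
    unfolding W_def g_def R_def by (intro has_integral_mult_right integrable_integral)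
  have "(f has_integral 2 * R - s * W a s) {0..pi/2}"
    using has_integral_diff[OF sum part] by simp
  then show ?thesis unfolding I2_def f_def R_def by (rule integral_unique)
qed

lemma psi2_eq_W:
  assumes "0 < s"
  shows "psi2 \<alpha> s \<delta> 0 = 4 / \<delta> * ((sqrt ((cmod \<alpha>)\<^sup>2 + s) - 1)\<^sup>2 + s * W (cmod \<alpha>) s)"
proof -
  have "(sqrt ((cmod \<alpha>)\<^sup>2 + s))\<^sup>2 = (cmod \<alpha>)\<^sup>2 + s" using assms by simp
  then show ?thesis by (simp add: psi2_eq_I2 I2_eq_W[OF assms] power2_diff algebra_simps)
qed

lemma sqrt_sq_sin_bounds:
  fixes a s S :: real
  assumes S: "0 \<le> S" "S \<le> 1" and s: "0 < s"
  shows "sqrt (a\<^sup>2 + s) * S \<le> sqrt (a\<^sup>2 * S\<^sup>2 + s)"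
    and "sqrt (a\<^sup>2 * S\<^sup>2 + s) \<le> sqrt (a\<^sup>2 + s) * S + sqrt s"
proof -
  have S2: "S\<^sup>2 \<le> 1" using S by (simp add: power_le_one)
  have "(sqrt (a\<^sup>2 + s) * S)\<^sup>2 = (a\<^sup>2 + s) * S\<^sup>2" using s by (simp add: power_mult_distrib)
  also have "\<dots> \<le> a\<^sup>2 * S\<^sup>2 + s" using S2 s by (simp add: algebra_simps mult_left_le)
  finally show "sqrt (a\<^sup>2 + s) * S \<le> sqrt (a\<^sup>2 * S\<^sup>2 + s)"
    using S s by (simp add: real_le_rsqrt)
  have "sqrt (a\<^sup>2 * S\<^sup>2 + s) \<le> sqrt (a\<^sup>2 * S\<^sup>2) + sqrt s"
    by (rule sqrt_add_le_add_sqrt) (use s in auto)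
  also have "sqrt (a\<^sup>2 * S\<^sup>2) = \<bar>a\<bar> * S" using S by (simp add: real_sqrt_mult)
  also have "\<bar>a\<bar> * S \<le> sqrt (a\<^sup>2 + s) * S"
    using S s by (intro mult_right_mono) (auto simp: real_le_rsqrt)
  finally show "sqrt (a\<^sup>2 * S\<^sup>2 + s) \<le> sqrt (a\<^sup>2 + s) * S + sqrt s" by simp
qed

lemma W_nonneg:
  assumes "0 < s"
  shows "0 \<le> W a s"
  unfolding W_def
proof (rule integral_nonneg[OF W_integrable[OF assms]])
  fix t assume "t \<in> {0..pi/2}"
  then show "0 \<le> (sin t)\<^sup>2 / (sqrt (a\<^sup>2 * (sin t)\<^sup>2 + s) + sqrt (a\<^sup>2 + s) * sin t)"
    using sin_cos_0_pi_half_bounds(1) assms by (simp add: add_nonneg_nonneg)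
qed

lemma W_le:
  assumes s: "0 < s"
  shows "W a s \<le> 1 / (2 * sqrt (a\<^sup>2 + s))"
proof -
  define R where "R = sqrt (a\<^sup>2 + s)"
  have R: "0 < R" unfolding R_def using s by (simp add: add_nonneg_pos)
  have "((\<lambda>t. sin t / (2 * R)) has_integral 1 / (2 * R)) {0..pi/2}"
    using has_integral_mult_right[OF sin_has_integral_0_pi_half, of "1 / (2 * R)"] by simp
  then have "W a s \<le> 1 / (2 * R)" unfolding W_def
  proof (rule has_integral_le[OF integrable_integral[OF W_integrable[OF s]]])
    fix t assume t: "t \<in> {0..pi/2}"
    note S = sin_cos_0_pi_half_bounds(1,2)[OF t]
    have D: "2 * R * sin t \<le> sqrt (a\<^sup>2 * (sin t)\<^sup>2 + s) + R * sin t"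
      using sqrt_sq_sin_bounds(1)[of "sin t" s a] S s unfolding R_def by linarith
    show "(sin t)\<^sup>2 / (sqrt (a\<^sup>2 * (sin t)\<^sup>2 + s) + sqrt (a\<^sup>2 + s) * sin t) \<le> sin t / (2 * R)"
    proof (cases "sin t = 0")
      case False
      then have "0 < 2 * R * sin t" using S R by simp
      then have "(sin t)\<^sup>2 / (sqrt (a\<^sup>2 * (sin t)\<^sup>2 + s) + R * sin t) \<le> (sin t)\<^sup>2 / (2 * R * sin t)"
        using D by (intro divide_left_mono) auto
      also have "\<dots> = sin t / (2 * R)" using False by (simp add: power2_eq_square)
      finally show ?thesis unfolding R_def .
    qed simp
  qed
  then show ?thesis unfolding R_def .
qed

lemma square_div_ge_linear:
  fixes R S e D :: real
  assumes "0 < R" "0 \<le> S" "0 \<le> e" "0 < D" "D \<le> 2 * R * S + e"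
  shows "S / (2 * R) - e / (4 * R\<^sup>2) \<le> S\<^sup>2 / D"
proof (cases "2 * R * S + e = 0")
  case True
  then have "S = 0" "e = 0" using assms by (auto simp: add_nonneg_eq_0_iff)
  then show ?thesis by simp
next
  case False
  then have P: "0 < 2 * R * S + e" using assms by (simp add: order_le_neq_trans)
  have "S\<^sup>2 / (2 * R * S + e) - (S / (2 * R) - e / (4 * R\<^sup>2)) = e\<^sup>2 / (4 * R\<^sup>2 * (2 * R * S + e))"
    using P assms by (simp add: field_simps power2_eq_square)
  moreover have "0 \<le> e\<^sup>2 / (4 * R\<^sup>2 * (2 * R * S + e))" using P by simp
  ultimately have "S / (2 * R) - e / (4 * R\<^sup>2) \<le> S\<^sup>2 / (2 * R * S + e)" by linarith
  also have "\<dots> \<le> S\<^sup>2 / D" using assms by (intro divide_left_mono) auto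
  finally show ?thesis .
qed

lemma W_ge:
  assumes s: "0 < s"
  shows "1 / (2 * sqrt (a\<^sup>2 + s)) - pi * sqrt s / (8 * (sqrt (a\<^sup>2 + s))\<^sup>2) \<le> W a s"
proof -
  define R where "R = sqrt (a\<^sup>2 + s)"
  have R: "0 < R" unfolding R_def using s by (simp add: add_nonneg_pos)
  have "((\<lambda>t. sin t / (2 * R) - sqrt s / (4 * R\<^sup>2)) has_integral
          1 / (2 * R) - pi/2 * (sqrt s / (4 * R\<^sup>2))) {0..pi/2}"
    using has_integral_diff[OF has_integral_mult_right[OF sin_has_integral_0_pi_half, of "1 / (2 * R)"]
        has_integral_const_real[of "sqrt s / (4 * R\<^sup>2)" 0 "pi/2"]] by simp
  then have "1 / (2 * R) - pi/2 * (sqrt s / (4 * R\<^sup>2)) \<le> W a s" unfolding W_def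
  proof (rule has_integral_le[OF _ integrable_integral[OF W_integrable[OF s]]])
    fix t assume t: "t \<in> {0..pi/2}"
    note S = sin_cos_0_pi_half_bounds(1,2)[OF t]
    show "sin t / (2 * R) - sqrt s / (4 * R\<^sup>2)
        \<le> (sin t)\<^sup>2 / (sqrt (a\<^sup>2 * (sin t)\<^sup>2 + s) + sqrt (a\<^sup>2 + s) * sin t)"
      unfolding R_def[symmetric]
    proof (rule square_div_ge_linear)
      show "sqrt (a\<^sup>2 * (sin t)\<^sup>2 + s) + R * sin t \<le> 2 * R * sin t + sqrt s"
        using sqrt_sq_sin_bounds(2)[of "sin t" s a] S s unfolding R_def by linarith
      show "0 < sqrt (a\<^sup>2 * (sin t)\<^sup>2 + s) + R * sin t"
        using sqrt_sq_sin_pos[OF s, of a "sin t"] R S by (simp add: add_pos_nonneg)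
    qed (use R S s in auto)
  qed
  then show ?thesis unfolding R_def by simp
qed

lemma I1_integrable:
  assumes "0 < s"
  shows "(\<lambda>t. a * (sin t)\<^sup>2 / sqrt (a\<^sup>2 * (sin t)\<^sup>2 + s)) integrable_on {0..pi/2}"
proof (rule integrable_continuous_interval)
  have "sqrt (a\<^sup>2 * (sin t)\<^sup>2 + s) \<noteq> 0" for t
    using sqrt_sq_sin_pos[OF assms] by (metis less_irrefl)
  then show "continuous_on {0..pi/2} (\<lambda>t. a * (sin t)\<^sup>2 / sqrt (a\<^sup>2 * (sin t)\<^sup>2 + s))"
    by (intro continuous_intros) blast
qed

lemma I1_nonneg:
  assumes "0 \<le> a" "0 < s"
  shows "0 \<le> I1 a s"
  unfolding I1_def using assms
  by (intro integral_nonneg[OF I1_integrable]) auto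

lemma sin_minus_I1_integrand:
  fixes a s S :: real
  assumes "0 \<le> a" "0 \<le> S" "0 < s"
  defines "r \<equiv> sqrt (a\<^sup>2 * S\<^sup>2 + s)"
  shows "S - a * S\<^sup>2 / r = s * S / (r * (r + a * S))"
proof -
  have r: "0 < r" "r\<^sup>2 = a\<^sup>2 * S\<^sup>2 + s"
    using sqrt_sq_sin_pos[OF assms(3)] assms(3) unfolding r_def by (simp_all add: add_nonneg_pos)
  have D: "0 < r + a * S" using r assms by (simp add: add_pos_nonneg)
  have "S - a * S\<^sup>2 / r = S * (r - a * S) / r"
    using r by (simp add: field_simps power2_eq_square)
  also have "r - a * S = (r\<^sup>2 - a\<^sup>2 * S\<^sup>2) / (r + a * S)"
    using D by (simp add: field_simps power2_eq_square)
  finally show ?thesis using r by (simp add: ac_simps)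
qed

lemma I1_le:
  assumes a: "0 \<le> a" and s: "0 < s"
  shows "I1 a s \<le> 1 - s / (2 * (a\<^sup>2 + s))"
proof -
  define R where "R = sqrt (a\<^sup>2 + s)"
  have R: "0 < R" "R\<^sup>2 = a\<^sup>2 + s" unfolding R_def using s by (simp_all add: add_nonneg_pos)
  have "((\<lambda>t. sin t - s / (2 * R\<^sup>2) * sin t) has_integral 1 - s / (2 * R\<^sup>2) * 1) {0..pi/2}"
    by (intro has_integral_diff sin_has_integral_0_pi_half has_integral_mult_right)
  then have "I1 a s \<le> 1 - s / (2 * R\<^sup>2) * 1" unfolding I1_def
  proof (rule has_integral_le[OF integrable_integral[OF I1_integrable[OF s]]])
    fix t assume t: "t \<in> {0..pi/2}"
    define r where "r = sqrt (a\<^sup>2 * (sin t)\<^sup>2 + s)"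
    note S = sin_cos_0_pi_half_bounds(1,2)[OF t]
    have "a\<^sup>2 * (sin t)\<^sup>2 \<le> a\<^sup>2" using S by (simp add: mult_left_le power_le_one)
    then have "r \<le> R" unfolding r_def R_def by simp
    moreover have "a * sin t \<le> R"
      using S a mult_left_le[of "sin t" a] real_le_rsqrt[of a "a\<^sup>2 + s"] s unfolding R_def by linarith
    ultimately have r: "0 < r" "r \<le> R" "a * sin t \<le> R"
      using sqrt_sq_sin_pos[OF s] unfolding r_def by auto
    have "r * (r + a * sin t) \<le> R * (R + R)"
      using r S a by (intro mult_mono add_mono) auto
    then have "s * sin t / (2 * R\<^sup>2) \<le> s * sin t / (r * (r + a * sin t))"
      using r S s a by (intro divide_left_mono) (auto simp: power2_eq_square add_pos_nonneg)
    then show "a * (sin t)\<^sup>2 / sqrt (a\<^sup>2 * (sin t)\<^sup>2 + s) \<le> sin t - s / (2 * R\<^sup>2) * sin t"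
      using sin_minus_I1_integrand[OF a _ s, of "sin t"] S unfolding r_def by simp
  qed
  then show ?thesis using R by simp
qed

lemma sin_cos_div_has_integral:
  assumes a: "a \<noteq> 0" and s: "0 < s"
  shows "((\<lambda>t. sin t * cos t / (a\<^sup>2 * (sin t)\<^sup>2 + s)) has_integral ln ((a\<^sup>2 + s) / s) / (2 * a\<^sup>2))
           {0..pi/2}"
proof -
  have "((\<lambda>t. sin t * cos t / (a\<^sup>2 * (sin t)\<^sup>2 + s)) has_integral
      ln (a\<^sup>2 * (sin (pi/2))\<^sup>2 + s) / (2 * a\<^sup>2) - ln (a\<^sup>2 * (sin 0)\<^sup>2 + s) / (2 * a\<^sup>2)) {0..pi/2}"
  proof (rule has_integral_of_real_derivative)
    fix t :: real
    have Q: "0 < a\<^sup>2 * (sin t)\<^sup>2 + s" using s by (simp add: add_nonneg_pos)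
    have "((\<lambda>t. a\<^sup>2 * (sin t)\<^sup>2 + s) has_real_derivative a\<^sup>2 * (2 * sin t * cos t)) (at t)"
      by (auto intro!: derivative_eq_intros simp: power2_eq_square)
    from DERIV_cdivide[OF DERIV_chain'[OF this DERIV_ln_divide[OF Q]], of "2 * a\<^sup>2"]
    have "((\<lambda>t. ln (a\<^sup>2 * (sin t)\<^sup>2 + s) / (2 * a\<^sup>2)) has_real_derivative
        (1 / (a\<^sup>2 * (sin t)\<^sup>2 + s) * (a\<^sup>2 * (2 * sin t * cos t))) / (2 * a\<^sup>2)) (at t)" .
    moreover have "(1 / (a\<^sup>2 * (sin t)\<^sup>2 + s) * (a\<^sup>2 * (2 * sin t * cos t))) / (2 * a\<^sup>2)
        = sin t * cos t / (a\<^sup>2 * (sin t)\<^sup>2 + s)"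
      using a Q by (simp add: divide_simps)
    ultimately show "((\<lambda>t. ln (a\<^sup>2 * (sin t)\<^sup>2 + s) / (2 * a\<^sup>2)) has_real_derivative
        sin t * cos t / (a\<^sup>2 * (sin t)\<^sup>2 + s)) (at t)" by simp
  qed simp
  moreover have "0 < a\<^sup>2 + s" using s by (simp add: add_nonneg_pos)
  ultimately show ?thesis using s by (simp add: ln_div diff_divide_distrib)
qed

lemma I1_integrand_ge:
  assumes a: "0 < a" and s: "0 < s" and t: "t \<in> {0..pi/2}"
  shows "sin t - s * (sin t * cos t / (a\<^sup>2 * (sin t)\<^sup>2 + s) + sin t / a\<^sup>2)
           \<le> a * (sin t)\<^sup>2 / sqrt (a\<^sup>2 * (sin t)\<^sup>2 + s)"
proof -
  define r where "r = sqrt (a\<^sup>2 * (sin t)\<^sup>2 + s)"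
  define Q where "Q = a\<^sup>2 * (sin t)\<^sup>2 + s"
  note S = sin_cos_0_pi_half_bounds(1,2)[OF t] and C = sin_cos_0_pi_half_bounds(3)[OF t]
  have r: "0 < r" "r\<^sup>2 = Q" using sqrt_sq_sin_pos[OF s] s
    unfolding r_def Q_def by (simp_all add: add_nonneg_pos)
  have Q: "0 < Q" using r by auto
  have "s * sin t / (r * (r + a * sin t)) \<le> s * sin t / (r * r)"
    using r S s a by (intro divide_left_mono mult_left_mono) (auto simp: add_pos_nonneg)
  also have "\<dots> = s * (sin t / Q)" using r by (simp add: power2_eq_square)
  also have "sin t / Q \<le> sin t * cos t / Q + sin t / a\<^sup>2"
  proof -
    have "1 - cos t \<le> (sin t)\<^sup>2"
      using C cos_le_one[of t] sin_squared_eq[of t] mult_left_le[of "cos t" "cos t"]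
      by (simp add: power2_eq_square)
    then have "a\<^sup>2 * sin t * (1 - cos t) \<le> a\<^sup>2 * sin t * (sin t)\<^sup>2"
      using S by (intro mult_left_mono) auto
    also have "\<dots> \<le> sin t * Q" using S s by (simp add: Q_def algebra_simps)
    finally show ?thesis using Q a by (simp add: field_simps)
  qed
  finally have "s * sin t / (r * (r + a * sin t)) \<le> s * (sin t * cos t / Q + sin t / a\<^sup>2)"
    using s by (simp add: mult_left_mono)
  then show ?thesis
    using sin_minus_I1_integrand[of a "sin t" s] a S s by (simp add: r_def Q_def)
qed

lemma one_minus_I1_le:
  assumes a: "0 < a" and s: "0 < s"
  shows "1 - I1 a s \<le> s * (ln ((a\<^sup>2 + s) / s) / (2 * a\<^sup>2) + 1 / a\<^sup>2)"
proof -
  define L where "L = ln ((a\<^sup>2 + s) / s) / (2 * a\<^sup>2)"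
  have "((\<lambda>t. sin t / a\<^sup>2) has_integral 1 / a\<^sup>2) {0..pi/2}"
    using has_integral_mult_right[OF sin_has_integral_0_pi_half, of "1/a\<^sup>2"] by simp
  then have "((\<lambda>t. sin t - s * (sin t * cos t / (a\<^sup>2 * (sin t)\<^sup>2 + s) + sin t / a\<^sup>2))
      has_integral 1 - s * (L + 1 / a\<^sup>2)) {0..pi/2}"
    unfolding L_def using a s
    by (intro has_integral_diff sin_has_integral_0_pi_half has_integral_mult_right
        has_integral_add sin_cos_div_has_integral) auto
  then have "1 - s * (L + 1 / a\<^sup>2) \<le> I1 a s" unfolding I1_def
    by (rule has_integral_le[OF _ integrable_integral[OF I1_integrable[OF s]] I1_integrand_ge[OF a s]])
  then show ?thesis by (simp add: L_def)
qed

lemma ln_one_plus_sq_le: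
  assumes z: "0 < z"
  shows "(ln (1 + z))\<^sup>2 \<le> 16 * sqrt z"
proof -
  define v where "v = sqrt (sqrt z)"
  define w where "w = sqrt (sqrt (1 + z))"
  have p4: "\<And>u::real. u ^ 4 = (u\<^sup>2)\<^sup>2" by (simp add: power4_eq_xxxx power2_eq_square mult.assoc)
  have v: "0 \<le> v" "v ^ 4 = z" unfolding p4 v_def using z by simp_all
  have w: "1 \<le> w" "w ^ 4 = 1 + z" unfolding p4 w_def using z by simp_all
  have "(1 + v) ^ 4 = 1 + 4 * v + 6 * v\<^sup>2 + 4 * v ^ 3 + v ^ 4"
    by (simp add: power2_eq_square power3_eq_cube power4_eq_xxxx algebra_simps)
  then have "w ^ 4 \<le> (1 + v) ^ 4" using v w by simp
  then have wv: "w \<le> 1 + v" using power_mono_iff[of w "1 + v" 4] w v by simp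
  have "ln (1 + z) = ln (w ^ 4)" using w(2) by simp
  also have "\<dots> = 4 * ln w" using w(1) by (simp add: ln_realpow)
  also have "\<dots> \<le> 4 * v" using w wv ln_le_minus_one[of w] by simp
  finally have "ln (1 + z) \<le> 4 * v" .
  then have "(ln (1 + z))\<^sup>2 \<le> (4 * v)\<^sup>2" using z by (intro power_mono) auto
  also have "\<dots> = 16 * sqrt z" unfolding v_def using z by (simp add: power_mult_distrib)
  finally show ?thesis .
qed

lemma I1_le_one:
  assumes "0 < a" "0 \<le> s"
  shows "I1 a s \<le> 1"
proof (cases "s = 0")
  case False
  then have "0 < s" using assms by simp
  moreover have "0 \<le> s / (2 * (a\<^sup>2 + s))" using assms by simp
  ultimately show ?thesis using I1_le[of a s] assms by linarith
qed (use assms in \<open>simp add: I1_zero_variance\<close>)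

text \<open>The bound is \<open>o(s)\<close>, which is what lets the \<open>(1 - \<alpha>)\<^sup>2\<close> part of the potential contract.\<close>

lemma one_minus_I1_sq_le:
  assumes a: "1/2 \<le> a" "a \<le> 1" and s: "0 \<le> s"
  shows "(1 - I1 a s)\<^sup>2 \<le> (128 * sqrt s + 32 * s) * s"
proof (cases "s = 0")
  case True
  then show ?thesis using a by (simp add: I1_zero_variance)
next
  case False
  then have sp: "0 < s" using s by simp
  define L where "L = ln (1 + 1 / s)"
  have a2: "1/4 \<le> a\<^sup>2" "a\<^sup>2 \<le> 1"
    using power_mono[of "1/2" a 2] power_le_one[of a 2] a by (auto simp: power2_eq_square)
  have lnQ: "0 \<le> ln ((a\<^sup>2 + s) / s)" "ln ((a\<^sup>2 + s) / s) \<le> L"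
    using sp a2 by (auto simp: L_def field_simps add_pos_nonneg)
  have "ln ((a\<^sup>2 + s) / s) * 1 \<le> ln ((a\<^sup>2 + s) / s) * (4 * a\<^sup>2)"
    using lnQ(1) a2 by (intro mult_left_mono) auto
  then have "ln ((a\<^sup>2 + s) / s) / (2 * a\<^sup>2) \<le> 2 * ln ((a\<^sup>2 + s) / s)"
    using a2 by (simp add: divide_le_eq algebra_simps)
  moreover have "1 / a\<^sup>2 \<le> 4" using a2 by (simp add: divide_le_eq)
  ultimately have "s * (ln ((a\<^sup>2 + s) / s) / (2 * a\<^sup>2) + 1 / a\<^sup>2) \<le> s * (2 * L + 4)"
    using lnQ(2) sp by (intro mult_left_mono) auto
  then have "1 - I1 a s \<le> s * (2 * L + 4)"
    using one_minus_I1_le[of a s] a sp by linarith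
  moreover have "0 \<le> 1 - I1 a s" using I1_le_one[of a s] a s by simp
  ultimately have "(1 - I1 a s)\<^sup>2 \<le> s\<^sup>2 * (2 * L + 4)\<^sup>2"
    using power_mono[of "1 - I1 a s" "s * (2 * L + 4)" 2] by (simp add: power_mult_distrib)
  also have "\<dots> \<le> s\<^sup>2 * (8 * L\<^sup>2 + 32)"
    using zero_le_power2[of "2 * L - 4"] by (intro mult_left_mono) (auto simp: power2_eq_square algebra_simps)
  also have "\<dots> \<le> s\<^sup>2 * (8 * (16 * sqrt (1 / s)) + 32)"
    using ln_one_plus_sq_le[of "1 / s"] sp unfolding L_def by (intro mult_left_mono) auto
  also have "\<dots> = (128 * sqrt s + 32 * s) * s"
    using sp by (simp add: real_sqrt_divide field_simps power2_eq_square)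
  finally show ?thesis .
qed

lemma sqrt_sq_plus_minus_one_sq_le:
  assumes a: "0 \<le> a" "a \<le> 1" and s: "0 \<le> s"
  shows "(sqrt (a\<^sup>2 + s) - 1)\<^sup>2 \<le> (1 - a)\<^sup>2 + s\<^sup>2"
proof (cases "1 \<le> sqrt (a\<^sup>2 + s)")
  case True
  have "(1 + s)\<^sup>2 = 1 + 2 * s + s\<^sup>2" by (simp add: power2_sum)
  then have "a\<^sup>2 + s \<le> (1 + s)\<^sup>2" using power_le_one[of a 2] a s zero_le_power2[of s] by linarith
  then have "sqrt (a\<^sup>2 + s) - 1 \<le> s" using s real_le_lsqrt[of "1 + s" "a\<^sup>2 + s"] by simp
  then have "(sqrt (a\<^sup>2 + s) - 1)\<^sup>2 \<le> s\<^sup>2" using True by (intro power_mono) auto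
  then show ?thesis by (simp add: add_increasing)
next
  case False
  have "a \<le> sqrt (a\<^sup>2 + s)" using s by (simp add: real_le_rsqrt)
  then have "(1 - sqrt (a\<^sup>2 + s))\<^sup>2 \<le> (1 - a)\<^sup>2" using False by (intro power_mono) auto
  then show ?thesis by (simp add: power2_commute add_increasing2)
qed

lemma psi2_of_real_le:
  assumes a: "1/2 \<le> a" "a \<le> 1" and s: "0 \<le> s" and d: "0 < \<delta>"
  shows "psi2 (complex_of_real a) s \<delta> 0 \<le> 4 / \<delta> * ((1 - a)\<^sup>2 + s\<^sup>2) + 2 / \<delta> * (1 + 2 * (1 - a)) * s"
proof (cases "s = 0")
  case True
  then show ?thesis using a d by (simp add: psi2_zero_variance power2_commute)
next
  case False
  then have sp: "0 < s" using s by simp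
  define R where "R = sqrt (a\<^sup>2 + s)"
  have "a \<le> R" unfolding R_def using s by (simp add: real_le_rsqrt)
  then have "1 / (2 * R) \<le> 1 / (2 * a)" using a by (intro divide_left_mono) auto
  also have "\<dots> \<le> (1 + 2 * (1 - a)) / 2"
    using a mult_nonneg_nonneg[of "2 * a - 1" "1 - a"] by (simp add: field_simps algebra_simps)
  finally have "s * W a s \<le> s * ((1 + 2 * (1 - a)) / 2)"
    using W_le[OF sp, of a] sp unfolding R_def by (intro mult_left_mono) auto
  then have "(R - 1)\<^sup>2 + s * W a s \<le> (1 - a)\<^sup>2 + s\<^sup>2 + s * ((1 + 2 * (1 - a)) / 2)"
    using sqrt_sq_plus_minus_one_sq_le[of a s] a s unfolding R_def by linarith
  from mult_left_mono[OF this, of "4 / \<delta>"] d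
  have "psi2 (complex_of_real a) s \<delta> 0 \<le> 4 / \<delta> * ((1 - a)\<^sup>2 + s\<^sup>2 + s * ((1 + 2 * (1 - a)) / 2))"
    using a by (simp add: psi2_eq_W[OF sp] R_def)
  also have "\<dots> = 4 / \<delta> * ((1 - a)\<^sup>2 + s\<^sup>2) + 2 / \<delta> * (1 + 2 * (1 - a)) * s"
    using d by (simp add: field_simps)
  finally show ?thesis .
qed

lemma psi2_nonneg:
  assumes "0 < \<delta>" "0 \<le> s"
  shows "0 \<le> psi2 \<alpha> s \<delta> 0"
proof (cases "s = 0")
  case False
  then have "0 < s" using assms by simp
  then show ?thesis using assms W_nonneg[of s] by (simp add: psi2_eq_W)
qed (use assms in \<open>simp add: psi2_zero_variance\<close>)

lemma potential_contraction_arith: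
  fixes q c \<rho> \<beta> e s x s' x' :: real
  assumes s: "0 \<le> s" "s \<le> e\<^sup>2" and x: "0 \<le> x" "x \<le> e" and e: "0 \<le> e"
    and pos: "0 \<le> q" "0 \<le> c" "0 \<le> \<beta>"
    and hs: "s' \<le> c * (x\<^sup>2 + s\<^sup>2) + q * (1 + 2 * x) * s"
    and hx: "x'\<^sup>2 \<le> (128 * sqrt s + 32 * s) * s"
    and small: "c * e\<^sup>2 + 2 * q * e + \<beta> * (128 * e + 32 * e\<^sup>2) \<le> \<rho> - q"
    and \<rho>\<beta>: "\<rho> * \<beta> = c"
  shows "s' + \<beta> * x'\<^sup>2 \<le> \<rho> * (s + \<beta> * x\<^sup>2)"
proof -
  have "sqrt s \<le> e" using s e by (simp add: real_sqrt_le_iff real_le_lsqrt)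
  then have "128 * sqrt s + 32 * s \<le> 128 * e + 32 * e\<^sup>2" using s by linarith
  then have "x'\<^sup>2 \<le> (128 * e + 32 * e\<^sup>2) * s" using hx mult_right_mono[of _ _ s] s by fastforce
  then have "\<beta> * x'\<^sup>2 \<le> \<beta> * (128 * e + 32 * e\<^sup>2) * s"
    using pos mult_left_mono[of _ _ \<beta>] by (simp add: mult.assoc)
  moreover have "c * s\<^sup>2 \<le> c * e\<^sup>2 * s"
    using s pos mult_right_mono[of s "e\<^sup>2" s] by (simp add: power2_eq_square mult.assoc mult_left_mono)
  moreover have "2 * q * x * s \<le> 2 * q * e * s"
    using pos x s by (intro mult_right_mono mult_left_mono) auto
  moreover have "(c * e\<^sup>2 + 2 * q * e + \<beta> * (128 * e + 32 * e\<^sup>2)) * s \<le> (\<rho> - q) * s"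
    using small s by (intro mult_right_mono) auto
  ultimately have "s' + \<beta> * x'\<^sup>2 \<le> c * x\<^sup>2 + q * s + (\<rho> - q) * s"
    using hs by (simp add: algebra_simps)
  also have "\<dots> = \<rho> * (s + \<beta> * x\<^sup>2)" using \<rho>\<beta> by (simp add: algebra_simps)
  finally show ?thesis .
qed

lemma psi_step_potential_bound:
  assumes \<delta>: "0 < \<delta>" and e: "0 \<le> e" "e \<le> 1/2" and \<beta>: "0 \<le> \<beta>" and \<rho>\<beta>: "\<rho> * \<beta> = 4 / \<delta>"
    and small: "4 / \<delta> * e\<^sup>2 + 4 / \<delta> * e + \<beta> * (128 * e + 32 * e\<^sup>2) \<le> \<rho> - 2 / \<delta>"
    and a: "1 - e \<le> a" "a \<le> 1" and s: "0 \<le> s" "s \<le> e\<^sup>2"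
  shows "psi2 (complex_of_real a) s \<delta> 0 + \<beta> * (1 - I1 a s)\<^sup>2 \<le> \<rho> * (s + \<beta> * (1 - a)\<^sup>2)"
proof (rule potential_contraction_arith[OF s _ _ e(1)])
  have a': "1/2 \<le> a" using a e by linarith
  show "(1 - I1 a s)\<^sup>2 \<le> (128 * sqrt s + 32 * s) * s" by (rule one_minus_I1_sq_le[OF a' a(2) s(1)])
  show "psi2 (complex_of_real a) s \<delta> 0 \<le> 4 / \<delta> * ((1 - a)\<^sup>2 + s\<^sup>2) + 2 / \<delta> * (1 + 2 * (1 - a)) * s"
    by (rule psi2_of_real_le[OF a' a(2) s(1) \<delta>])
qed (use a \<delta> \<beta> \<rho>\<beta> small in \<open>auto simp: mult.assoc\<close>)

lemma contraction_radius_exists: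
  fixes q \<rho> \<beta> :: real
  assumes "0 < q" "q < \<rho>" "0 \<le> \<beta>"
  shows "\<exists>e>0. e \<le> 1/2 \<and> 2 * q * e\<^sup>2 + 2 * q * e + \<beta> * (128 * e + 32 * e\<^sup>2) \<le> \<rho> - q"
proof -
  define M where "M = 4 * q + 160 * \<beta>"
  define e where "e = min (1/2) ((\<rho> - q) / M)"
  have M: "0 < M" using assms by (simp add: M_def)
  have "e \<le> (\<rho> - q) / M" by (simp add: e_def)
  then have eM: "M * e \<le> \<rho> - q" using M by (simp add: pos_le_divide_eq mult.commute)
  have "0 < (\<rho> - q) / M" using M assms by simp
  then have "0 < e" by (simp add: e_def)
  moreover have "e \<le> 1/2" unfolding e_def by (rule min.cobounded1)
  ultimately have e: "0 < e" "e \<le> 1/2" by blast+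
  then have "e\<^sup>2 \<le> e" by (simp add: power2_eq_square mult_left_le)
  then have "2 * q * e\<^sup>2 \<le> 2 * q * e" "\<beta> * e\<^sup>2 \<le> \<beta> * e"
    using assms by (simp_all add: mult_left_mono)
  then have "2 * q * e\<^sup>2 + 2 * q * e + \<beta> * (128 * e + 32 * e\<^sup>2) \<le> \<rho> - q"
    using eM by (simp add: M_def algebra_simps)
  then show ?thesis using e by blast
qed

text \<open>\<open>\<rho>\<close> lies strictly between the linearised variance growth rate \<open>2/\<delta>\<close> and \<open>1\<close>; \<open>\<beta>\<close> is
  chosen so that \<open>\<rho> \<beta>\<close> equals the coefficient \<open>4/\<delta>\<close> of \<open>(1 - \<alpha>)\<^sup>2\<close> in the variance bound.\<close>

lemma se_step_contracts_potential:
  assumes "2 < \<delta>"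
  shows "\<exists>\<beta>>0. \<exists>\<rho>. 0 \<le> \<rho> \<and> \<rho> < 1 \<and> (\<exists>P>0. \<forall>a s. a \<le> 1 \<and> 0 \<le> s \<and> s + \<beta> * (1 - a)\<^sup>2 < P \<longrightarrow>
           0 < a \<and> I1 a s \<le> 1 \<and> 0 \<le> psi2 (complex_of_real a) s \<delta> 0
           \<and> psi2 (complex_of_real a) s \<delta> 0 + \<beta> * (1 - I1 a s)\<^sup>2 \<le> \<rho> * (s + \<beta> * (1 - a)\<^sup>2))"
proof -
  define q where "q = 2 / \<delta>"
  define \<rho> where "\<rho> = (1 + q) / 2"
  define \<beta> where "\<beta> = 2 * q / \<rho>"
  have q: "0 < q" "q < 1" using assms by (auto simp: q_def)
  then have \<rho>: "q < \<rho>" "\<rho> < 1" and \<beta>: "0 < \<beta>" by (auto simp: \<rho>_def \<beta>_def)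
  obtain e where e: "0 < e" "e \<le> 1/2"
    and "2 * q * e\<^sup>2 + 2 * q * e + \<beta> * (128 * e + 32 * e\<^sup>2) \<le> \<rho> - q"
    using contraction_radius_exists[OF q(1) \<rho>(1) less_imp_le[OF \<beta>]] by blast
  then have small: "4 / \<delta> * e\<^sup>2 + 4 / \<delta> * e + \<beta> * (128 * e + 32 * e\<^sup>2) \<le> \<rho> - 2 / \<delta>"
    by (simp add: q_def)
  have "0 < \<rho>" using q \<rho> by simp
  then have \<rho>\<beta>: "\<rho> * \<beta> = 4 / \<delta>" by (simp add: \<beta>_def q_def)
  have "0 < a \<and> I1 a s \<le> 1 \<and> 0 \<le> psi2 (complex_of_real a) s \<delta> 0
           \<and> psi2 (complex_of_real a) s \<delta> 0 + \<beta> * (1 - I1 a s)\<^sup>2 \<le> \<rho> * (s + \<beta> * (1 - a)\<^sup>2)"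
    if H: "a \<le> 1" "0 \<le> s" "s + \<beta> * (1 - a)\<^sup>2 < min 1 \<beta> * e\<^sup>2" for a s
  proof -
    have "min 1 \<beta> * e\<^sup>2 \<le> 1 * e\<^sup>2" "min 1 \<beta> * e\<^sup>2 \<le> \<beta> * e\<^sup>2"
      by (intro mult_right_mono; simp)+
    moreover have "0 \<le> \<beta> * (1 - a)\<^sup>2" using \<beta> by simp
    ultimately have "s \<le> e\<^sup>2" "\<beta> * (1 - a)\<^sup>2 \<le> \<beta> * e\<^sup>2" using H by linarith+
    then have s: "0 \<le> s" "s \<le> e\<^sup>2" and a: "1 - e \<le> a" "1/2 \<le> a" "a \<le> 1"
      using H \<beta> e power2_le_imp_le[of "1 - a" e] by auto
    show ?thesis
      using psi_step_potential_bound[OF _ _ e(2) _ \<rho>\<beta> small a(1,3) s] I1_le_one[of a s]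
        psi2_nonneg[of \<delta> s] a s e \<beta> assms by auto
  qed
  moreover have "0 < min 1 \<beta> * e\<^sup>2" using \<beta> e by simp
  ultimately show ?thesis using \<beta> \<rho> \<open>0 < \<rho>\<close> by (meson less_imp_le)
qed

lemma se_potential_decay:
  fixes V :: "complex \<times> real \<Rightarrow> real"
  assumes step: "\<And>\<alpha> s. (\<alpha>, s) \<in> D \<Longrightarrow>
      (psi1 \<alpha> s, psi2 \<alpha> s \<delta> sw2) \<in> D \<and> V (psi1 \<alpha> s, psi2 \<alpha> s \<delta> sw2) \<le> \<rho> * V (\<alpha>, s)"
    and \<rho>: "0 \<le> \<rho>" and start: "(\<alpha>0, s0) \<in> D"
  shows "se \<delta> sw2 \<alpha>0 s0 t \<in> D \<and> V (se \<delta> sw2 \<alpha>0 s0 t) \<le> \<rho> ^ t * V (\<alpha>0, s0)"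
proof (induction t)
  case (Suc t)
  obtain \<alpha> s where t: "se \<delta> sw2 \<alpha>0 s0 t = (\<alpha>, s)" by fastforce
  with Suc have "(\<alpha>, s) \<in> D" "V (\<alpha>, s) \<le> \<rho> ^ t * V (\<alpha>0, s0)" by auto
  with step[of \<alpha> s] mult_left_mono[of "V (\<alpha>, s)" "\<rho> ^ t * V (\<alpha>0, s0)" \<rho>] \<rho>
  show ?case by (simp add: t mult.assoc)
qed (use start in simp)

lemma tendsto_of_potential_tendsto_zero:
  fixes A :: "nat \<Rightarrow> 'a::real_normed_vector" and S :: "nat \<Rightarrow> real"
  assumes "\<And>t. 0 \<le> S t" and "0 < \<beta>"
    and "(\<lambda>t. S t + \<beta> * (norm (A t - c))\<^sup>2) \<longlonglongrightarrow> 0"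
  shows "A \<longlonglongrightarrow> c" and "S \<longlonglongrightarrow> 0"
proof -
  define V where "V t = S t + \<beta> * (norm (A t - c))\<^sup>2" for t
  have bounds: "S t \<le> V t" "norm (A t - c) \<le> sqrt (V t / \<beta>)" for t
    using assms(1,2) real_le_rsqrt[of "norm (A t - c)" "V t / \<beta>"] by (simp_all add: V_def field_simps)
  have V: "V \<longlonglongrightarrow> 0" using assms(3) unfolding V_def[abs_def] .
  show "S \<longlonglongrightarrow> 0"
    by (rule tendsto_sandwich[OF _ _ tendsto_const V]) (use assms(1) bounds in auto)
  have "(\<lambda>t. sqrt (V t / \<beta>)) \<longlonglongrightarrow> 0"
    using tendsto_real_sqrt[OF tendsto_divide_zero[OF V, of \<beta>]] by simp
  then have "(\<lambda>t. A t - c) \<longlonglongrightarrow> 0"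
    by (rule Lim_null_comparison[rotated]) (use bounds in auto)
  then show "A \<longlonglongrightarrow> c" by (simp add: LIM_zero_iff)
qed

lemma se_converges_in_contraction_region:
  assumes \<beta>: "0 < \<beta>" and \<rho>: "0 \<le> \<rho>" "\<rho> < 1"
    and step: "\<And>a s. a \<le> 1 \<Longrightarrow> 0 \<le> s \<Longrightarrow> s + \<beta> * (1 - a)\<^sup>2 < P \<Longrightarrow>
           0 < a \<and> I1 a s \<le> 1 \<and> 0 \<le> psi2 (complex_of_real a) s \<delta> 0
           \<and> psi2 (complex_of_real a) s \<delta> 0 + \<beta> * (1 - I1 a s)\<^sup>2 \<le> \<rho> * (s + \<beta> * (1 - a)\<^sup>2)"
    and start: "a0 \<le> 1" "0 \<le> s0" "s0 + \<beta> * (1 - a0)\<^sup>2 < P"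
  shows "(\<lambda>t. fst (se \<delta> 0 (complex_of_real a0) s0 t)) \<longlonglongrightarrow> 1"
    and "(\<lambda>t. snd (se \<delta> 0 (complex_of_real a0) s0 t)) \<longlonglongrightarrow> 0"
proof -
  define V :: "complex \<times> real \<Rightarrow> real" where "V = (\<lambda>(\<alpha>, s). s + \<beta> * (cmod (\<alpha> - 1))\<^sup>2)"
  define D where "D = {(\<alpha>, s). \<exists>a. \<alpha> = complex_of_real a \<and> a \<le> 1 \<and> 0 \<le> s \<and> s + \<beta> * (1 - a)\<^sup>2 < P}"
  have V_real: "V (complex_of_real a, s) = s + \<beta> * (1 - a)\<^sup>2" for a s
  proof -
    have "cmod (complex_of_real a - 1) = \<bar>1 - a\<bar>"
      by (metis norm_of_real of_real_1 of_real_diff abs_minus_commute)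
    then show ?thesis by (simp add: V_def)
  qed
  have decay: "se \<delta> 0 (complex_of_real a0) s0 t \<in> D
      \<and> V (se \<delta> 0 (complex_of_real a0) s0 t) \<le> \<rho> ^ t * V (complex_of_real a0, s0)" for t
  proof (rule se_potential_decay[OF _ \<rho>(1)])
    fix \<alpha> s assume "(\<alpha>, s) \<in> D"
    then obtain a where a: "\<alpha> = complex_of_real a" "a \<le> 1" "0 \<le> s" "s + \<beta> * (1 - a)\<^sup>2 < P"
      unfolding D_def by blast
    note st = step[OF a(2-4)]
    have "\<rho> * (s + \<beta> * (1 - a)\<^sup>2) \<le> s + \<beta> * (1 - a)\<^sup>2"
      using \<rho> a \<beta> by (intro mult_left_le_one_le) auto
    with st have "psi2 \<alpha> s \<delta> 0 + \<beta> * (1 - I1 a s)\<^sup>2 < P" using a by simp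
    with st a show "(psi1 \<alpha> s, psi2 \<alpha> s \<delta> 0) \<in> D \<and> V (psi1 \<alpha> s, psi2 \<alpha> s \<delta> 0) \<le> \<rho> * V (\<alpha>, s)"
      unfolding D_def by (simp add: psi1_of_real V_real)
  qed (use start in \<open>auto simp: D_def\<close>)
  have lim: "(\<lambda>t. \<rho> ^ t * V (complex_of_real a0, s0)) \<longlonglongrightarrow> 0"
    using \<rho> by (intro tendsto_mult_left_zero LIMSEQ_power_zero) auto
  have nonneg: "0 \<le> snd (se \<delta> 0 (complex_of_real a0) s0 t)"
    "0 \<le> V (se \<delta> 0 (complex_of_real a0) s0 t)" for t
    using decay[of t] \<beta> unfolding D_def by (auto simp: V_real)
  have "(\<lambda>t. V (se \<delta> 0 (complex_of_real a0) s0 t)) \<longlonglongrightarrow> 0"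
    by (rule tendsto_sandwich[OF always_eventually always_eventually tendsto_const lim])
      (use nonneg decay in blast)+
  then have "(\<lambda>t. snd (se \<delta> 0 (complex_of_real a0) s0 t)
      + \<beta> * (norm (fst (se \<delta> 0 (complex_of_real a0) s0 t) - 1))\<^sup>2) \<longlonglongrightarrow> 0"
    by (simp add: V_def case_prod_unfold)
  from tendsto_of_potential_tendsto_zero[OF nonneg(1) \<beta> this]
  show "(\<lambda>t. fst (se \<delta> 0 (complex_of_real a0) s0 t)) \<longlonglongrightarrow> 1"
    and "(\<lambda>t. snd (se \<delta> 0 (complex_of_real a0) s0 t)) \<longlonglongrightarrow> 0" .
qed

lemma se_converges_for_large_delta:
  assumes "2 < \<delta>"
  shows "\<exists>\<epsilon>1>0. \<exists>\<epsilon>2>0. \<forall>a0 s0. 1 - \<epsilon>1 < a0 \<and> a0 < 1 \<and> 0 < s0 \<and> s0 < \<epsilon>2 \<longrightarrow>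
           ((\<lambda>t. fst (se \<delta> 0 (complex_of_real a0) s0 t)) \<longlonglongrightarrow> 1)
           \<and> ((\<lambda>t. snd (se \<delta> 0 (complex_of_real a0) s0 t)) \<longlonglongrightarrow> 0)"
proof -
  from se_step_contracts_potential[OF assms]
  obtain \<beta> \<rho> P where \<beta>: "0 < \<beta>" and \<rho>: "0 \<le> \<rho>" "\<rho> < 1" and P: "0 < P"
    and step: "\<forall>a s. a \<le> 1 \<and> 0 \<le> s \<and> s + \<beta> * (1 - a)\<^sup>2 < P \<longrightarrow>
           0 < a \<and> I1 a s \<le> 1 \<and> 0 \<le> psi2 (complex_of_real a) s \<delta> 0
           \<and> psi2 (complex_of_real a) s \<delta> 0 + \<beta> * (1 - I1 a s)\<^sup>2 \<le> \<rho> * (s + \<beta> * (1 - a)\<^sup>2)"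
    by blast
  define \<epsilon>1 where "\<epsilon>1 = sqrt (P / (2 * \<beta>))"
  have "((\<lambda>t. fst (se \<delta> 0 (complex_of_real a0) s0 t)) \<longlonglongrightarrow> 1)
      \<and> ((\<lambda>t. snd (se \<delta> 0 (complex_of_real a0) s0 t)) \<longlonglongrightarrow> 0)"
    if H: "1 - \<epsilon>1 < a0 \<and> a0 < 1 \<and> 0 < s0 \<and> s0 < P / 2" for a0 s0
  proof -
    have "(1 - a0)\<^sup>2 < \<epsilon>1\<^sup>2" using H by (intro power_strict_mono) auto
    then have "\<beta> * (1 - a0)\<^sup>2 < P / 2" using P \<beta> by (simp add: \<epsilon>1_def field_simps)
    then show ?thesis
      using se_converges_in_contraction_region[OF \<beta> \<rho> step[rule_format]] H by simp
  qed
  moreover have "0 < \<epsilon>1" "0 < P / 2" using P \<beta> by (simp_all add: \<epsilon>1_def)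
  ultimately show ?thesis by blast
qed

lemma psi_preimage_of_fixed_point:
  assumes \<delta>: "0 < \<delta>" and s: "0 \<le> s" and "psi1 \<alpha> s = 1" and "psi2 \<alpha> s \<delta> 0 = 0"
  shows "\<alpha> = 1 \<and> s = 0"
proof -
  have "\<alpha> \<noteq> 0" using assms(3) by (auto simp: psi1_eq_I1 I1_def)
  then have a: "0 < cmod \<alpha>" by simp
  have "s = 0"
  proof (rule ccontr)
    assume "s \<noteq> 0"
    then have sp: "0 < s" using s by simp
    then have "0 < s / (2 * ((cmod \<alpha>)\<^sup>2 + s))" by (simp add: add_nonneg_pos)
    then have "\<bar>I1 (cmod \<alpha>) s\<bar> < 1"
      using I1_le[OF _ sp, of "cmod \<alpha>"] I1_nonneg[OF _ sp, of "cmod \<alpha>"] by simp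
    moreover have "norm (psi1 \<alpha> s) = \<bar>I1 (cmod \<alpha>) s\<bar>" by (simp add: psi1_eq_I1 norm_mult)
    ultimately show False using assms(3) by simp
  qed
  moreover from this have "cmod \<alpha> = 1" using assms(4) \<delta> by (simp add: psi2_zero_variance)
  ultimately show ?thesis using assms(3) by (simp add: psi1_zero_variance sgn_div_norm)
qed

text \<open>Since \<open>W \<approx> 1/(2 R)\<close>, \<open>\<psi>\<^sub>2 \<ge> q s (1/R - O(\<surd>s))\<close>; the bound \<open>R < 2q/(q+1)\<close> gives
  \<open>1/R > (1/q + 1)/2\<close>, leaving the margin \<open>(q - 1)/(2q)\<close> for the error term.\<close>

lemma psi2_gt_variance:
  fixes \<alpha> :: complex
  assumes \<delta>: "0 < \<delta>" and s: "0 < s"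
  defines "q \<equiv> 2 / \<delta>" and "R \<equiv> sqrt ((cmod \<alpha>)\<^sup>2 + s)"
  assumes R: "1/2 < R" "R < 2 * q / (q + 1)" and small: "pi * sqrt s < (q - 1) / (2 * q)"
  shows "s < psi2 \<alpha> s \<delta> 0"
proof -
  have "0 < q" using \<delta> by (simp add: q_def)
  moreover have "0 \<le> pi * sqrt s" using s by simp
  then have "0 < (q - 1) / (2 * q)" using small by linarith
  ultimately have q: "1 < q" by (simp add: zero_less_divide_iff)
  have "(q + 1) / (2 * q) < 1 / R" using R q by (simp add: field_simps)
  moreover have "1 \<le> 4 * R\<^sup>2" using R power_mono[of "1/2" R 2] by (simp add: power2_eq_square)
  then have "pi * sqrt s / (4 * R\<^sup>2) \<le> pi * sqrt s / 1"
    using s by (intro divide_left_mono) auto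
  ultimately have "q * ((q + 1) / (2 * q) - pi * sqrt s) < q * (1 / R - pi * sqrt s / (4 * R\<^sup>2))"
    using q by (intro mult_strict_left_mono) auto
  moreover have "q * ((q + 1) / (2 * q) - pi * sqrt s) = (q + 1) / 2 - q * (pi * sqrt s)"
    using q by (simp add: field_simps)
  moreover have "q * (pi * sqrt s) < (q - 1) / 2"
    using mult_strict_left_mono[OF small, of q] q by simp
  ultimately have "1 < q * (1 / R - pi * sqrt s / (4 * R\<^sup>2))" by argo
  then have "s < s * (q * (1 / R - pi * sqrt s / (4 * R\<^sup>2)))" using s by simp
  also have "\<dots> = 4 / \<delta> * (s * (1 / (2 * R) - pi * sqrt s / (8 * R\<^sup>2)))"
    using R \<delta> by (simp add: q_def field_simps)
  also have "\<dots> \<le> 4 / \<delta> * (s * W (cmod \<alpha>) s)"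
    using W_ge[OF s, of "cmod \<alpha>"] \<delta> s unfolding R_def by (intro mult_left_mono) auto
  also have "\<dots> \<le> 4 / \<delta> * ((R - 1)\<^sup>2 + s * W (cmod \<alpha>) s)"
    using \<delta> by (intro mult_left_mono) auto
  also have "\<dots> = psi2 \<alpha> s \<delta> 0" by (simp add: psi2_eq_W[OF s] R_def)
  finally show ?thesis .
qed

lemma psi2_increases_near_fixed_point:
  assumes \<delta>: "0 < \<delta>" "\<delta> < 2"
  shows "\<exists>\<epsilon>>0. \<forall>\<alpha> s. 0 < s \<and> s < \<epsilon> \<and> cmod (\<alpha> - 1) < \<epsilon> \<longrightarrow> s < psi2 \<alpha> s \<delta> 0"
proof -
  define q where "q = 2 / \<delta>"
  define Rb where "Rb = 2 * q / (q + 1)"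
  define K where "K = (q - 1) / (2 * q * pi)"
  have q: "1 < q" using \<delta> by (simp add: q_def)
  then have Rb: "1 < Rb\<^sup>2" and K: "0 < K"
    by (simp_all add: Rb_def K_def one_less_power)
  define \<epsilon> where "\<epsilon> = min (1/2) (min ((Rb\<^sup>2 - 1) / 4) (K\<^sup>2))"
  have "\<epsilon> \<le> (Rb\<^sup>2 - 1) / 4" unfolding \<epsilon>_def by (rule order_trans[OF min.cobounded2 min.cobounded1])
  moreover have "\<epsilon> \<le> 1/2" "\<epsilon> \<le> K\<^sup>2" unfolding \<epsilon>_def
    by (rule min.cobounded1, rule order_trans[OF min.cobounded2 min.cobounded2])
  moreover have "0 < \<epsilon>" using Rb K by (simp add: \<epsilon>_def)
  ultimately have \<epsilon>: "0 < \<epsilon>" "\<epsilon> \<le> 1/2" "4 * \<epsilon> \<le> Rb\<^sup>2 - 1" "\<epsilon> \<le> K\<^sup>2" by auto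
  show ?thesis
  proof (rule exI[of _ \<epsilon>], intro conjI allI impI)
    fix \<alpha> :: complex and s :: real
    assume H: "0 < s \<and> s < \<epsilon> \<and> cmod (\<alpha> - 1) < \<epsilon>"
    define R where "R = sqrt ((cmod \<alpha>)\<^sup>2 + s)"
    have "\<bar>cmod \<alpha> - 1\<bar> < \<epsilon>" using norm_triangle_ineq3[of \<alpha> 1] H by simp
    then have a: "1 - \<epsilon> < cmod \<alpha>" "cmod \<alpha> < 1 + \<epsilon>" by auto
    have "cmod \<alpha> \<le> R" using H by (simp add: R_def real_le_rsqrt)
    then have R1: "1/2 < R" using a \<epsilon> by linarith
    have "(cmod \<alpha>)\<^sup>2 < (1 + \<epsilon>)\<^sup>2" using a by (intro power_strict_mono) auto
    moreover have "(1 + \<epsilon>)\<^sup>2 \<le> 1 + 3 * \<epsilon>"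
      using \<epsilon> mult_right_le_one_le[of \<epsilon> \<epsilon>] by (simp add: power2_eq_square algebra_simps)
    ultimately have "R\<^sup>2 < Rb\<^sup>2" using H \<epsilon> by (simp add: R_def add_nonneg_nonneg)
    then have R2: "R < Rb" by (rule power_less_imp_less_base) (use q in \<open>simp add: Rb_def\<close>)
    have "sqrt s < sqrt (K\<^sup>2)" using H \<epsilon> by (simp only: real_sqrt_less_iff) linarith
    then have "pi * sqrt s < pi * K" using K by simp
    also have "pi * K = (q - 1) / (2 * q)" by (simp add: K_def)
    finally have small: "pi * sqrt s < (q - 1) / (2 * q)" .
    show "s < psi2 \<alpha> s \<delta> 0"
      using H[THEN conjunct1] R1 R2 small unfolding R_def Rb_def q_def
      by (rule psi2_gt_variance[OF \<delta>(1)])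
  qed (use \<epsilon> in simp)
qed

lemma eventually_zero_if_increasing_while_positive:
  fixes S :: "nat \<Rightarrow> real"
  assumes nonneg: "\<And>t. 0 \<le> S t" and lim: "S \<longlonglongrightarrow> 0"
    and grow: "\<And>t. N \<le> t \<Longrightarrow> 0 < S t \<Longrightarrow> S t < S (Suc t)"
    and t: "N \<le> t"
  shows "S t = 0"
proof (rule ccontr)
  assume "S t \<noteq> 0"
  then have pos: "0 < S t" using nonneg[of t] by simp
  have mono: "S t \<le> S (t + k)" for k
  proof (induction k)
    case (Suc k)
    then have "S (t + k) < S (Suc (t + k))" using grow[of "t + k"] pos t by simp
    with Suc show ?case by simp
  qed simp
  obtain M where M: "\<And>n. M \<le> n \<Longrightarrow> S n < S t"
    using order_tendstoD(2)[OF lim pos] unfolding eventually_sequentially by blast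
  have "S (t + M) < S t" by (rule M) simp
  with mono[of M] show False by simp
qed

lemma se_snd_nonneg:
  assumes "0 < \<delta>" "0 \<le> s0"
  shows "0 \<le> snd (se \<delta> 0 \<alpha>0 s0 t)"
  by (induction t) (use assms in \<open>simp_all add: psi2_nonneg\<close>)

lemma se_reaches_fixed_point_only_from_it:
  assumes "0 < \<delta>" "0 \<le> s0" and "se \<delta> 0 \<alpha>0 s0 t = (1, 0)"
  shows "\<alpha>0 = 1 \<and> s0 = 0"
  using assms(3)
proof (induction t)
  case (Suc t)
  then have "psi1 (fst (se \<delta> 0 \<alpha>0 s0 t)) (snd (se \<delta> 0 \<alpha>0 s0 t)) = 1"
    "psi2 (fst (se \<delta> 0 \<alpha>0 s0 t)) (snd (se \<delta> 0 \<alpha>0 s0 t)) \<delta> 0 = 0" by simp_all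
  from psi_preimage_of_fixed_point[OF assms(1) se_snd_nonneg[OF assms(1,2)] this]
  show ?case using Suc.IH by (simp add: prod_eq_iff)
qed simp

lemma se_converges_to_fixed_point_only_from_it:
  assumes \<delta>: "0 < \<delta>" "\<delta> < 2" and s0: "0 \<le> s0"
    and lim_fst: "(\<lambda>t. fst (se \<delta> 0 \<alpha>0 s0 t)) \<longlonglongrightarrow> 1"
    and lim_snd: "(\<lambda>t. snd (se \<delta> 0 \<alpha>0 s0 t)) \<longlonglongrightarrow> 0"
  shows "\<alpha>0 = 1 \<and> s0 = 0"
proof -
  define A where "A t = fst (se \<delta> 0 \<alpha>0 s0 t)" for t
  define S where "S t = snd (se \<delta> 0 \<alpha>0 s0 t)" for t
  have AS: "A (Suc t) = psi1 (A t) (S t)" "S (Suc t) = psi2 (A t) (S t) \<delta> 0" for t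
    by (simp_all add: A_def S_def)
  have S_nonneg: "0 \<le> S t" for t unfolding S_def by (rule se_snd_nonneg[OF \<delta>(1) s0])
  have A: "A \<longlonglongrightarrow> 1" and S: "S \<longlonglongrightarrow> 0"
    using lim_fst lim_snd unfolding A_def[abs_def] S_def[abs_def] .
  obtain \<epsilon> where "0 < \<epsilon>" and grow: "\<And>\<alpha> s. 0 < s \<Longrightarrow> s < \<epsilon> \<Longrightarrow> cmod (\<alpha> - 1) < \<epsilon> \<Longrightarrow> s < psi2 \<alpha> s \<delta> 0"
    using psi2_increases_near_fixed_point[OF \<delta>] by blast
  then have "eventually (\<lambda>t. dist (A t) 1 < \<epsilon>) sequentially" "eventually (\<lambda>t. S t < \<epsilon>) sequentially"
    using tendstoD[OF A] order_tendstoD(2)[OF S] by auto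
  then obtain N where N: "\<And>t. N \<le> t \<Longrightarrow> cmod (A t - 1) < \<epsilon> \<and> S t < \<epsilon>"
    unfolding eventually_sequentially dist_norm by (metis le_trans nle_le)
  have S_zero: "S t = 0" if "N \<le> t" for t
    using S_nonneg S _ that
  proof (rule eventually_zero_if_increasing_while_positive)
    show "S t < S (Suc t)" if "N \<le> t" "0 < S t" for t
      using grow[of "S t" "A t"] N[OF that(1)] that(2) by (simp add: AS)
  qed
  have A_const: "A (Suc t) = A t" if "N \<le> t" for t
  proof -
    have "4 / \<delta> * (cmod (A t) - 1)\<^sup>2 = 0"
      using S_zero[of "Suc t"] S_zero[OF that] that by (simp add: AS psi2_zero_variance)
    then have "cmod (A t) = 1" using \<delta> by simp
    then show ?thesis using S_zero[OF that] by (simp add: AS psi1_zero_variance sgn_div_norm)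
  qed
  have "A (k + N) = A N" for k
    by (induction k) (simp_all add: A_const)
  then have "(\<lambda>k. A N) \<longlonglongrightarrow> 1" using LIMSEQ_ignore_initial_segment[OF A, of N] by simp
  then have "A N = 1" using LIMSEQ_unique[OF tendsto_const] by blast
  then have "se \<delta> 0 \<alpha>0 s0 N = (1, 0)" using S_zero[of N] by (simp add: A_def S_def prod_eq_iff)
  then show ?thesis by (rule se_reaches_fixed_point_only_from_it[OF \<delta>(1) s0])
qed

text \<open>Part (b) does not need the hypothesis \<open>(\<alpha>0, s0) \<noteq> (0, 0)\<close>.\<close>

theorem mainTheorem2:
  shows "psi1 1 0 = 1
    \<and> (\<forall>\<delta>>0. psi2 1 0 \<delta> 0 = 0)
    \<and> (\<forall>\<delta>>2. \<exists>\<epsilon>1>0. \<exists>\<epsilon>2>0. \<forall>a0::real. \<forall>s0::real.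
          1 - \<epsilon>1 < a0 \<and> a0 < 1 \<and> 0 < s0 \<and> s0 < \<epsilon>2 \<longrightarrow>
            ((\<lambda>t. fst (se \<delta> 0 (complex_of_real a0) s0 t)) \<longlonglongrightarrow> 1)
            \<and> ((\<lambda>t. snd (se \<delta> 0 (complex_of_real a0) s0 t)) \<longlonglongrightarrow> 0))
    \<and> (\<forall>\<delta>. 0 < \<delta> \<and> \<delta> < 2 \<longrightarrow> (\<forall>\<alpha>0::complex. \<forall>s0::real.
          0 \<le> s0 \<and> (\<alpha>0, s0) \<noteq> (0, 0)
          \<and> ((\<lambda>t. fst (se \<delta> 0 \<alpha>0 s0 t)) \<longlonglongrightarrow> 1)
          \<and> ((\<lambda>t. snd (se \<delta> 0 \<alpha>0 s0 t)) \<longlonglongrightarrow> 0)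
          \<longrightarrow> \<alpha>0 = 1 \<and> s0 = 0))"
  using se_converges_for_large_delta se_converges_to_fixed_point_only_from_it
  by (simp add: psi1_zero_variance psi2_zero_variance) meson

end
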